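(* Let $n\ge 2$ be an integer and $k$ an integer with $0\le k\le n-1$. Then $$e_k\left(\left\{\sin^2\left(\tfrac{j\pi}{2n}\right) : j=1,\dots,n-1\right\}\right) = \frac{4^{-k}(2n-k-1)!}{(2n-2k-1)!\,k!}.$$
   Context: $e_k(\alpha_1,\dots,\alpha_m)$ denotes the degree-$k$ elementary symmetric function of $\alpha_1,\dots,\alpha_m$ (with $e_0=1$). *)

theory Defs
  imports "HOL-Analysis.Analysis"
begin

definition elem_sym :: "nat \<Rightarrow> 'i set \<Rightarrow> ('i \<Rightarrow> 'a::comm_ring_1) \<Rightarrow> 'a" where
  "elem_sym k I a = (\<Sum>S\<in>{S. S \<subseteq> I \<and> card S = k}. \<Prod>i\<in>S. a i)"

end

theory Submission
  imports Defs "HOL-Computational_Algebra.Polynomial"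
begin

(* The polynomial R_n = sin_multiple_poly n with sin (2 n t) = sin t cos t R_n(cos^2 t)
   (so that x R_n(x^2) is the Chebyshev polynomial U_(2n-1)) has degree n - 1 and explicit
   coefficients (-1)^(n+i+1) 2 4^i binom(n+i, 2i+1). Substituting t = pi/2 - j pi/(2n) shows that
   the n - 1 distinct numbers sin^2 (j pi/(2n)), 0 < j < n, are roots of R_n, so R_n is its
   leading coefficient 2 4^(n-1) times the product of the X - sin^2 (j pi/(2n)), and Vieta's
   formulas read e_k off the coefficient of X^(n-1-k). *)

lemma prod_linear_factors_expand:
  fixes a :: "'i \<Rightarrow> 'a::comm_ring_1"
  assumes "finite I"
  shows "(\<Prod>i\<in>I. [:- a i, 1:])
    = (\<Sum>B\<in>Pow I. monom (\<Prod>i\<in>B. - a i) (card I - card B))"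
proof -
  have "(\<Prod>i\<in>I. [:- a i, 1:]) = (\<Prod>i\<in>I. [:- a i:] + monom 1 1)"
    by (intro prod.cong refl) (simp add: monom_Suc)
  also have "\<dots> = (\<Sum>B\<in>Pow I. (\<Prod>i\<in>B. [:- a i:]) * monom 1 1 ^ card (I - B))"
    by (simp add: prod_add[OF assms])
  also have "\<dots> = (\<Sum>B\<in>Pow I. monom (\<Prod>i\<in>B. - a i) (card I - card B))"
    using assms by (intro sum.cong refl)
      (auto simp: prod_to_poly monom_power card_Diff_subset finite_subset smult_monom)
  finally show ?thesis .
qed

lemma coeff_prod_linear_factors:
  fixes a :: "'i \<Rightarrow> 'a::comm_ring_1"
  assumes "finite I" and "k \<le> card I"
  shows "coeff (\<Prod>i\<in>I. [:- a i, 1:]) (card I - k) = (-1)^k * elem_sym k I a"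
proof -
  have card_diff: "card I - card B = card I - k \<longleftrightarrow> card B = k" if "B \<in> Pow I" for B
    using assms(2) card_mono[OF assms(1), of B] that by auto
  have "coeff (\<Prod>i\<in>I. [:- a i, 1:]) (card I - k)
      = (\<Sum>B\<in>Pow I. if card I - card B = card I - k then \<Prod>i\<in>B. - a i else 0)"
    using assms(1) by (simp add: prod_linear_factors_expand coeff_sum)
  also have "\<dots> = (\<Sum>B\<in>Pow I. if card B = k then \<Prod>i\<in>B. - a i else 0)"
    by (rule sum.cong[OF refl]) (simp only: card_diff)
  also have "\<dots> = (\<Sum>B\<in>{B. B \<subseteq> I \<and> card B = k}. \<Prod>i\<in>B. - a i)"
    using assms(1) by (subst sum.inter_filter[symmetric]) simp_all
  also have "\<dots> = (\<Sum>B\<in>{B. B \<subseteq> I \<and> card B = k}. (-1)^k * (\<Prod>i\<in>B. a i))"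
    by (intro sum.cong refl) (auto simp: prod_uminus)
  finally show ?thesis
    by (simp add: elem_sym_def sum_distrib_left)
qed

lemma poly_eq_smult_prod_roots:
  fixes p :: "'a::idom poly" and a :: "'i \<Rightarrow> 'a"
  assumes "finite I" and "inj_on a I" and "degree p \<le> card I"
    and roots: "\<And>i. i \<in> I \<Longrightarrow> poly p (a i) = 0"
  shows "p = smult (coeff p (card I)) (\<Prod>i\<in>I. [:- a i, 1:])"
proof (rule ccontr)
  define Q where "Q = (\<Prod>i\<in>I. [:- a i, 1:])"
  define D where "D = p - smult (coeff p (card I)) Q"
  assume "p \<noteq> smult (coeff p (card I)) (\<Prod>i\<in>I. [:- a i, 1:])"
  then have "D \<noteq> 0"
    by (simp add: D_def Q_def)
  have "degree Q = card I" "coeff Q (card I) = 1"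
    using degree_prod_eq_sum_degree[of I "\<lambda>i. [:- a i, 1:]"]
      lead_coeff_prod[of "\<lambda>i. [:- a i, 1:]" I]
    by (simp_all add: Q_def)
  then have "degree D \<le> card I" "coeff D (card I) = 0"
    using assms(3) by (auto simp: D_def intro: degree_diff_le)
  with \<open>D \<noteq> 0\<close> have "degree D < card I"
    by (metis le_neq_implies_less leading_coeff_0_iff)
  have "poly Q (a i) = 0" if "i \<in> I" for i
    using assms(1) that by (auto simp: Q_def poly_prod)
  then have "a ` I \<subseteq> {x. poly D x = 0}"
    using roots by (auto simp: D_def)
  then have "card I \<le> card {x. poly D x = 0}"
    using poly_roots_finite[OF \<open>D \<noteq> 0\<close>] card_mono card_image[OF assms(2)] by metis
  also have "\<dots> \<le> degree D"
    by (rule card_poly_roots_bound[OF \<open>D \<noteq> 0\<close>])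
  finally show False
    using \<open>degree D < card I\<close> by simp
qed

(* At y = cos^2 t the factor [:-2, 4:] is 2 cos (2t), matching
   sin (2(m+2)t) = 2 cos (2t) sin (2(m+1)t) - sin (2mt). *)
fun sin_multiple_poly :: "nat \<Rightarrow> real poly" where
  "sin_multiple_poly 0 = 0"
| "sin_multiple_poly (Suc 0) = [:2:]"
| "sin_multiple_poly (Suc (Suc m)) = [:-2, 4:] * sin_multiple_poly (Suc m) - sin_multiple_poly m"

lemma binomial_two_step:
  "(a + 2 choose b + 2) + (a choose b + 2) = 2 * (a + 1 choose b + 2) + (a choose b)"
  using binomial_Suc_Suc[of "a + 1" "b + 1"] binomial_Suc_Suc[of a b] binomial_Suc_Suc[of a "b + 1"]
  by simp

lemma coeff_sin_multiple_poly:
  "coeff (sin_multiple_poly m) i = (-1)^(m+i+1) * 2 * 4^i * real (m + i choose 2*i + 1)"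
proof (induction m arbitrary: i rule: sin_multiple_poly.induct)
  case 1
  then show ?case by simp
next
  case 2
  then show ?case by (cases i) (auto simp: coeff_pCons binomial_eq_0 split: nat.splits)
next
  case (3 m)
  have mult_linear: "[:-2, 4:] * p = smult (-2) p + pCons 0 (smult 4 p)" for p :: "real poly"
    by (simp add: algebra_simps)
  show ?case
  proof (cases i)
    case 0
    then show ?thesis
      using 3 by (simp add: mult_linear algebra_simps)
  next
    case (Suc j)
    have "(m + j + 3 choose 2*j + 3) + (m + j + 1 choose 2*j + 3)
        = 2 * (m + j + 2 choose 2*j + 3) + (m + j + 1 choose 2*j + 1)"
      using binomial_two_step[of "m + j + 1" "2*j + 1"]
      by (simp add: eval_nat_numeral del: binomial_Suc_Suc)
    then have "real (m + j + 3 choose 2*j + 3) + real (m + j + 1 choose 2*j + 3)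
        = 2 * real (m + j + 2 choose 2*j + 3) + real (m + j + 1 choose 2*j + 1)"
      by (metis of_nat_add of_nat_mult of_nat_numeral)
    then have "(-1)^(m+j) * 8 * 4^j
          * (real (m + j + 3 choose 2*j + 3) + real (m + j + 1 choose 2*j + 3))
        = (-1)^(m+j) * 8 * 4^j
          * (2 * real (m + j + 2 choose 2*j + 3) + real (m + j + 1 choose 2*j + 1))"
      by simp
    then show ?thesis
      using 3 Suc by (simp add: mult_linear algebra_simps numeral_eq_Suc del: binomial_Suc_Suc)
  qed
qed

lemma sin_multiple_poly_eq:
  "sin (2 * real m * t) = sin t * cos t * poly (sin_multiple_poly m) ((cos t)^2)"
proof (induction m rule: sin_multiple_poly.induct)
  case 1
  then show ?case by simp
next
  case 2
  then show ?case by (simp add: sin_double)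
next
  case (3 m)
  have "2 * real (Suc (Suc m)) * t = 2 * real (Suc m) * t + 2 * t"
    and "2 * real m * t = 2 * real (Suc m) * t - 2 * t"
    by (simp_all add: algebra_simps)
  then have rec: "sin (2 * real (Suc (Suc m)) * t)
      = 2 * cos (2 * t) * sin (2 * real (Suc m) * t) - sin (2 * real m * t)"
    by (simp only: sin_add sin_diff) (simp add: algebra_simps)
  have cos_2t: "cos (2 * t) = 2 * (cos t)^2 - 1"
    by (simp add: cos_double sin_squared_eq)
  show ?case
    unfolding rec cos_2t 3 by (simp add: algebra_simps)
qed

lemma degree_sin_multiple_poly: "degree (sin_multiple_poly m) \<le> m - 1"
  by (rule degree_le) (simp add: coeff_sin_multiple_poly binomial_eq_0)

lemma coeff_sin_multiple_poly_from_top: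
  assumes "k < m"
  shows "coeff (sin_multiple_poly m) (m - 1 - k)
    = (-1)^k * 2 * 4^(m - 1 - k) * real (2*m - k - 1 choose k)"
proof -
  have idx: "m + (m - 1 - k) = 2*m - k - 1" "2*m - k - 1 + 1 = k + 2 * (m - k)"
    "2 * (m - 1 - k) + 1 = (2*m - k - 1) - k" "k \<le> 2*m - k - 1"
    using assms by auto
  then have "(2*m - k - 1 choose 2 * (m - 1 - k) + 1) = (2*m - k - 1 choose k)"
    by (metis binomial_symmetric)
  then have "coeff (sin_multiple_poly m) (m - 1 - k)
      = (-1)^(k + 2 * (m - k)) * 2 * 4^(m - 1 - k) * real (2*m - k - 1 choose k)"
    unfolding coeff_sin_multiple_poly idx(1,2) by simp
  then show ?thesis
    by (simp add: power_add power_mult)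
qed

definition sin_sq_node :: "nat \<Rightarrow> nat \<Rightarrow> real" where
  "sin_sq_node n j = (sin (real j * pi / (2 * real n)))^2"

lemma half_quadrant_angle_bounds:
  assumes "0 < j" and "j < n"
  shows "0 < real j * pi / (2 * real n)" and "real j * pi / (2 * real n) < pi / 2"
  using assms by (simp_all add: field_simps)

lemma poly_sin_multiple_poly_sin_sq:
  assumes "0 < j" and "j < n"
  shows "poly (sin_multiple_poly n) (sin_sq_node n j) = 0"
proof -
  define a where "a = real j * pi / (2 * real n)"
  \<comment> \<open>the complementary angle: cos t = sin a, and 2 n t is a multiple of pi\<close>
  define t where "t = pi/2 - a"
  have "2 * real n * t = real (n - j) * pi"
    using assms by (simp add: t_def a_def field_simps)
  then have "sin (2 * real n * t) = 0"
    by simp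
  moreover have "cos t = sin a"
    by (simp add: t_def cos_sin_eq)
  moreover have "sin t = cos a"
    by (simp add: t_def sin_cos_eq)
  moreover have "0 < a" and "a < pi/2"
    using half_quadrant_angle_bounds[OF assms] by (simp_all add: a_def)
  then have "sin a > 0" and "cos a > 0"
    by (simp_all add: sin_gt_zero cos_gt_zero)
  ultimately show ?thesis
    using sin_multiple_poly_eq[of n t] by (simp add: sin_sq_node_def a_def)
qed

lemma inj_on_sin_sq_node: "inj_on (sin_sq_node n) {1..n-1}"
proof (rule inj_onI)
  fix i j
  assume "i \<in> {1..n-1}" "j \<in> {1..n-1}" and eq: "sin_sq_node n i = sin_sq_node n j"
  define \<alpha> \<beta> where "\<alpha> = real i * pi / (2 * real n)"
    and "\<beta> = real j * pi / (2 * real n)"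
  have bounds: "0 < \<alpha>" "\<alpha> < pi/2" "0 < \<beta>" "\<beta> < pi/2"
    using half_quadrant_angle_bounds[of i n] half_quadrant_angle_bounds[of j n]
      \<open>i \<in> {1..n-1}\<close> \<open>j \<in> {1..n-1}\<close>
    by (auto simp: \<alpha>_def \<beta>_def)
  then have "sin \<alpha> \<ge> 0" "sin \<beta> \<ge> 0"
    by (simp_all add: sin_ge_zero)
  then have "sin \<alpha> = sin \<beta>"
    using eq by (simp add: sin_sq_node_def \<alpha>_def \<beta>_def power2_eq_iff_nonneg)
  then have "\<alpha> = \<beta>"
    using bounds by (intro sin_inj_pi[of \<alpha> \<beta>]) auto
  then show "i = j"
    using \<open>i \<in> {1..n-1}\<close> by (auto simp: \<alpha>_def \<beta>_def)
qed

lemma sin_multiple_poly_eq_prod: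
  assumes "0 < n"
  shows "sin_multiple_poly n
    = smult (2 * 4^(n - 1)) (\<Prod>j\<in>{1..n-1}. [:- sin_sq_node n j, 1:])"
proof -
  have "coeff (sin_multiple_poly n) (n - 1) = 2 * 4^(n - 1)"
    using coeff_sin_multiple_poly_from_top[of 0 n] assms by simp
  moreover have "sin_multiple_poly n
    = smult (coeff (sin_multiple_poly n) (card {1..n-1}))
        (\<Prod>j\<in>{1..n-1}. [:- sin_sq_node n j, 1:])"
    by (rule poly_eq_smult_prod_roots[OF _ inj_on_sin_sq_node])
      (use degree_sin_multiple_poly poly_sin_multiple_poly_sin_sq in auto)
  ultimately show ?thesis
    by simp
qed

theorem mainTheorem8:
  fixes n k :: nat
  assumes "n \<ge> 2" and "k \<le> n - 1"
  shows "elem_sym k {1..n-1} (\<lambda>j. (sin (real j * pi / (2 * real n)))^2)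
         = (1/4)^k * fact (2*n-k-1) / (fact (2*n-2*k-1) * fact k)"
proof -
  have "elem_sym k {1..n-1} (sin_sq_node n)
      = (-1)^k * coeff (\<Prod>j\<in>{1..n-1}. [:- sin_sq_node n j, 1:]) (n - 1 - k)"
    using coeff_prod_linear_factors[of "{1..n-1}" k "sin_sq_node n"] assms by simp
  also have "\<dots> = (-1)^k * coeff (sin_multiple_poly n) (n - 1 - k) / (2 * 4^(n - 1))"
    using sin_multiple_poly_eq_prod[of n] assms by simp
  also have "\<dots> = 4^(n - 1 - k) / 4^(n - 1) * real (2*n - k - 1 choose k)"
    using coeff_sin_multiple_poly_from_top[of k n] assms by (simp flip: power_mult_distrib)
  also have "4^(n - 1 - k) / 4^(n - 1) = (1/4 :: real)^k"
    using assms by (simp add: power_diff power_one_over)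
  also have "real (2*n - k - 1 choose k) = fact (2*n - k - 1) / (fact (2*n - 2*k - 1) * fact k)"
  proof -
    have le: "k \<le> 2*n - k - 1" and diff: "2*n - k - 1 - k = 2*n - 2*k - 1"
      using assms by auto
    show ?thesis
      using binomial_fact[OF le] unfolding diff by (simp add: mult.commute)
  qed
  finally show ?thesis
    by (simp add: sin_sq_node_def)
qed

end
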